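(* For any realization of a run of Algorithm 4 (described in the context) under the standing assumption, the number of unsuccessful iterations performed before termination is either zero or else satisfies \[ |\mathcal{U}|\ \le\ \Big\lfloor 1+\log_{\gamma_1}\Big(\tfrac{3(1-\eta)}{2L_H\delta_{\max}}\Big)+\log_{\gamma_1}(\epsilon_H)\Big\rfloor\,(|\mathcal{S}|+1). \]
   Context: Let $f:\mathbb{R}^n\to\mathbb{R}$ with gradient $g=\nabla f$ and Hessian $H=\nabla^2f$; $\|\cdot\|$ is the Euclidean norm, $\lambda_{\min}$ the smallest eigenvalue, $\mathbb{S}^n$ the real symmetric $n\times n$ matrices. Write $f_k=f(x_k)$, $g_k=g(x_k)$, $H_k=H(x_k)$, $m_k(x)=f_k+g_k^T(x-x_k)+\tfrac12(x-x_k)^TH_k(x-x_k)$. Exact arithmetic is assumed. Algorithm 2 (truncated CG; inputs nonzero $g$, $H\in\mathbb{S}^n$, $\epsilon>0$, $\delta>0$, $\zeta\in(0,1)$, flag capCG, and $M\ge\|H\|$): $k_{\max}=\min\{n,\tfrac12\sqrt{\kappa}\ln(4\kappa^{3/2}/\zeta)\}$ with $\kappa=(M+2\epsilon)/\epsilon$ if capCG is true, else $k_{\max}=n$. Set $y_0=0,r_0=g,p_0=-g,j=0$. While $j<k_{\max}$: if $p_j^T(H+2\epsilon I)p_j\le\epsilon\|p_j\|^2$, return $s=y_j+\sigma p_j$ with $\sigma\ge0$, $\|s\|=\delta$, flag BND-NEG; set $\alpha_j=\|r_j\|^2/(p_j^T(H+2\epsilon I)p_j)$, $y_{j+1}=y_j+\alpha_jp_j$;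 if $\|y_{j+1}\|\ge\delta$, return $s=y_j+\sigma p_j$ with $\sigma\ge0$, $\|s\|=\delta$, flag BND-NORM; set $r_{j+1}=r_j+\alpha_j(H+2\epsilon I)p_j$; if $\|r_{j+1}\|\le\tfrac\zeta2\min\{\|g\|,\epsilon\|y_{j+1}\|\}$, return $s=y_{j+1}$, flag INT-RES; set $\beta_{j+1}=\|r_{j+1}\|^2/\|r_j\|^2$, $p_{j+1}=-r_{j+1}+\beta_{j+1}p_j$, $j\leftarrow j+1$. On loop exit return $s=y_j$, flag INT-MAX. Algorithm 3 (minimum eigenvalue oracle, MEO; inputs $g$, $H\in\mathbb{S}^n$, $\epsilon>0$, $\delta>0$, $\xi\in(0,1)$, $M\ge\|H\|$): a possibly randomized procedure that either returns $s=\pm\delta v$ with $\|v\|=1$, $v^THv\le-\epsilon/2$, satisfying $g^Ts\le0$, $s^THs\le-\tfrac12\epsilon\|s\|^2$, $\|s\|=\delta$, or returns an indication that $H\succeq-\epsilon I$. Algorithm 4 (inexact trust-region Newton-CG). Inputs: $\epsilon_g,\epsilon_H>0$; $\gamma_1\in(0,1)$, $\gamma_2\ge1$, $\psi\in(1/\gamma_2,1]$; $x_0$; $\delta_0>0$; $\delta_{\max}\ge\delta_0$; $\eta\in(0,1)$; $\zeta\in(0,1)$; $\xi\in[0,1)$; capCG; $M\ge L_g$. For $k=0,1,\dots$: evaluate $g_k,H_k$. If $g_k\ne0$, call Algorithm 2 with $(g_k,H_k,\epsilon_H,\delta_k,\zeta,\text{capCG},M)$ obtaining $s_k^{CG}$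 and flag outCG; else set $s_k^{CG}=0$, outCG$=$INT-RES. If outCG$\in\{$BND-NEG, BND-NORM$\}$ or ($\|g_k\|>\epsilon_g$ and outCG$=$INT-RES), set $s_k=s_k^{CG}$. Otherwise call Algorithm 3 with $(g_k,H_k,\epsilon_H,\delta_k,\xi,M)$; if it indicates $H_k\succeq-\epsilon_HI$, return $x_k$ (terminate), else take its output as $s_k$. Set $\rho_k=\frac{f_k-f(x_k+s_k)}{m_k(x_k)-m_k(x_k+s_k)}$. If $\rho_k\ge\eta$: $x_{k+1}=x_k+s_k$ and $\delta_{k+1}=\min\{\gamma_2\delta_k,\delta_{\max}\}$ if $\|s_k\|\ge\psi\delta_k$, else $\delta_{k+1}=\delta_k$. If $\rho_k<\eta$: $x_{k+1}=x_k$, $\delta_{k+1}=\gamma_1\|s_k\|$. $\mathcal{K}$ is the set of indices $k$ such that iteration $k$ is completed without termination (for the given realization); $\mathcal{S}=\{k\in\mathcal{K}:\rho_k\ge\eta\}$, $\mathcal{U}=\{k\in\mathcal{K}:\rho_k<\eta\}$. Standing assumption: $\{f_k\}$ is bounded below by some $f_{\rm low}\in\mathbb{R}$, and all segments $[x_k,x_k+s_k]$ lie in an open set on which $f$ is twice continuously differentiable with gradient Lipschitz with constant $L_g>0$ and Hessian Lipschitz with constant $L_H>0$. *)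

theory Defs
  imports "HOL-Analysis.Analysis" "HOL-Library.Extended_Nat"
begin

datatype cg_flag = BND_NEG | BND_NORM | INT_RES | INT_MAX

primrec cg_seq :: "real^'n \<Rightarrow> real^'n^'n \<Rightarrow> real \<Rightarrow> nat \<Rightarrow> ((real^'n) \<times> (real^'n) \<times> (real^'n))" where
  "cg_seq g H eps 0 = (0, g, - g)"
| "cg_seq g H eps (Suc j) =
     (let (y, r, p) = cg_seq g H eps j;
          Ap = H *v p + (2 * eps) *\<^sub>R p;
          alpha = (norm r)\<^sup>2 / (p \<bullet> Ap);
          y' = y + alpha *\<^sub>R p;
          r' = r + alpha *\<^sub>R Ap;
          beta = (norm r')\<^sup>2 / (norm r)\<^sup>2
      in (y', r', - r' + beta *\<^sub>R p))"

definition cg_kmax :: "nat \<Rightarrow> bool \<Rightarrow> real \<Rightarrow> real \<Rightarrow> real \<Rightarrow> real" where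
  "cg_kmax n capCG eps M zeta =
     (let kappa = (M + 2 * eps) / eps
      in if capCG then min (real n) (1/2 * sqrt kappa * ln (4 * kappa powr (3/2) / zeta))
         else real n)"

definition to_bnd :: "real^'n \<Rightarrow> real^'n \<Rightarrow> real \<Rightarrow> real^'n" where
  "to_bnd y p delta = y + (SOME sigma. sigma \<ge> 0 \<and> norm (y + sigma *\<^sub>R p) = delta) *\<^sub>R p"

fun cg_loop :: "real^'n \<Rightarrow> real^'n^'n \<Rightarrow> real \<Rightarrow> real \<Rightarrow> real \<Rightarrow> real \<Rightarrow> nat \<Rightarrow> nat
                 \<Rightarrow> (real^'n) \<times> cg_flag" where
  "cg_loop g H eps delta zeta kmax j 0 = (fst (cg_seq g H eps j), INT_MAX)"
| "cg_loop g H eps delta zeta kmax j (Suc fuel) =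
     (let (y, r, p) = cg_seq g H eps j;
          (y', r', p') = cg_seq g H eps (Suc j)
      in if \<not> (real j < kmax) then (y, INT_MAX)
         else if p \<bullet> (H *v p + (2 * eps) *\<^sub>R p) \<le> eps * (norm p)\<^sup>2 then (to_bnd y p delta, BND_NEG)
         else if norm y' \<ge> delta then (to_bnd y p delta, BND_NORM)
         else if norm r' \<le> zeta / 2 * min (norm g) (eps * norm y') then (y', INT_RES)
         else cg_loop g H eps delta zeta kmax (Suc j) fuel)"

text \<open>Algorithm 2 with inputs (g, H, eps, delta, zeta, capCG, M); since k_max \<le> n,
  n+1 loop tests suffice (at j = n the loop guard fails).\<close>
definition truncated_cg :: "real^'n \<Rightarrow> real^'n^'n \<Rightarrow> real \<Rightarrow> real \<Rightarrow> real \<Rightarrow> bool \<Rightarrow> real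
                              \<Rightarrow> (real^'n) \<times> cg_flag" where
  "truncated_cg g H eps delta zeta capCG M =
     cg_loop g H eps delta zeta (cg_kmax CARD('n) capCG eps M zeta) 0 CARD('n)"

definition meo_direction :: "real^'n \<Rightarrow> real^'n^'n \<Rightarrow> real \<Rightarrow> real \<Rightarrow> real^'n \<Rightarrow> bool" where
  "meo_direction g H eps delta s \<longleftrightarrow>
     (\<exists>v. norm v = 1 \<and> v \<bullet> (H *v v) \<le> - eps / 2 \<and> (s = delta *\<^sub>R v \<or> s = - (delta *\<^sub>R v)))
     \<and> g \<bullet> s \<le> 0 \<and> s \<bullet> (H *v s) \<le> - (1/2) * eps * (norm s)\<^sup>2 \<and> norm s = delta"

definition model_red :: "real^'n \<Rightarrow> real^'n^'n \<Rightarrow> real^'n \<Rightarrow> real" where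
  "model_red gk Hk s = - (gk \<bullet> s + 1/2 * (s \<bullet> (Hk *v s)))"

definition tr_rho :: "(real^'n \<Rightarrow> real) \<Rightarrow> (real^'n \<Rightarrow> real^'n) \<Rightarrow> (real^'n \<Rightarrow> real^'n^'n)
                      \<Rightarrow> (nat \<Rightarrow> real^'n) \<Rightarrow> (nat \<Rightarrow> real^'n) \<Rightarrow> nat \<Rightarrow> real" where
  "tr_rho f g H x s k = (f (x k) - f (x k + s k)) / model_red (g (x k)) (H (x k)) (s k)"

definition cg_call :: "(real^'n \<Rightarrow> real^'n) \<Rightarrow> (real^'n \<Rightarrow> real^'n^'n) \<Rightarrow> real \<Rightarrow> real \<Rightarrow> bool \<Rightarrow> real
                       \<Rightarrow> real^'n \<Rightarrow> real \<Rightarrow> (real^'n) \<times> cg_flag" where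
  "cg_call g H epsH zeta capCG M xk deltak =
     (if g xk \<noteq> 0 then truncated_cg (g xk) (H xk) epsH deltak zeta capCG M else (0, INT_RES))"

definition cg_accepted :: "real \<Rightarrow> real^'n \<Rightarrow> cg_flag \<Rightarrow> bool" where
  "cg_accepted epsg gk out \<longleftrightarrow> out = BND_NEG \<or> out = BND_NORM \<or> (norm gk > epsg \<and> out = INT_RES)"

text \<open>A realization of a run of Algorithm 4: iterates x k, radii delta k, steps s k;
  T (possibly infinite) is the number of completed iterations, i.e. the index
  set K is {k. k < T}; if T is finite, iteration T terminates (MEO reports
  H \<succeq> - epsH I, which for a randomized oracle may occur at any MEO call).\<close>
definition alg4_run ::
  "(real^'n \<Rightarrow> real) \<Rightarrow> (real^'n \<Rightarrow> real^'n) \<Rightarrow> (real^'n \<Rightarrow> real^'n^'n)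
   \<Rightarrow> real \<Rightarrow> real \<Rightarrow> real \<Rightarrow> real \<Rightarrow> real \<Rightarrow> real^'n \<Rightarrow> real \<Rightarrow> real \<Rightarrow> real \<Rightarrow> real \<Rightarrow> bool \<Rightarrow> real
   \<Rightarrow> (nat \<Rightarrow> real^'n) \<Rightarrow> (nat \<Rightarrow> real) \<Rightarrow> (nat \<Rightarrow> real^'n) \<Rightarrow> enat \<Rightarrow> bool" where
  "alg4_run f g H epsg epsH gamma1 gamma2 psi x0 delta0 deltamax eta zeta capCG M x delta s T \<longleftrightarrow>
     x 0 = x0 \<and> delta 0 = delta0 \<and>
     (\<forall>k. enat k < T \<longrightarrow>
        (let (sCG, out) = cg_call g H epsH zeta capCG M (x k) (delta k)
         in (if cg_accepted epsg (g (x k)) out then s k = sCG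
             else meo_direction (g (x k)) (H (x k)) epsH (delta k) (s k)))
        \<and> (if tr_rho f g H x s k \<ge> eta
           then x (Suc k) = x k + s k \<and>
                delta (Suc k) = (if norm (s k) \<ge> psi * delta k then min (gamma2 * delta k) deltamax
                                 else delta k)
           else x (Suc k) = x k \<and> delta (Suc k) = gamma1 * norm (s k))) \<and>
     (\<forall>t. T = enat t \<longrightarrow>
        \<not> cg_accepted epsg (g (x t)) (snd (cg_call g H epsH zeta capCG M (x t) (delta t))))"

end

theory Submission
  imports Defs
begin

(*
  Every step s_k of the method satisfies 0 < |s_k| <= delta_k and decreases the model by at
  least epsH |s_k|^2 / 4: for a step of the eigenvalue oracle this is its curvature condition,
  for a CG step it follows from the conjugacy of the CG directions and the growth of the norm of
  the CG iterates along them, which rely on the symmetry of the Hessian.  With the cubic Taylor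
  bound given by the Lipschitz continuity of the Hessian, every step with
  |s_k| <= 3 (1 - eta) epsH / (2 LH) is successful.  Hence an unsuccessful iteration has |s_k|
  above this threshold and sets delta_(k+1) = gamma1 |s_k| <= gamma1 delta_k; as
  delta_k <= deltamax, a run of consecutive unsuccessful iterations has length at most c.  Each
  maximal run starts at iteration 0 or right after a successful iteration, so |U| <= c (|S| + 1).
*)

lemma norm_ray_power2:
  fixes y p :: "'a::real_inner"
  shows "(norm (y + t *\<^sub>R p))\<^sup>2 = (norm y)\<^sup>2 + 2 * t * (y \<bullet> p) + t\<^sup>2 * (norm p)\<^sup>2"
  unfolding power2_norm_eq_inner
  by (simp add: inner_add_left inner_add_right inner_commute power2_eq_square algebra_simps)

lemma norm_ray_strict_mono:
  fixes y p :: "'a::real_inner"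
  assumes "y \<bullet> p \<ge> 0" and "p \<noteq> 0" and "0 \<le> s" and "s < t"
  shows "norm (y + s *\<^sub>R p) < norm (y + t *\<^sub>R p)"
proof -
  have "s\<^sup>2 < t\<^sup>2"
    using assms by (simp add: power_strict_mono)
  then have "s\<^sup>2 * (norm p)\<^sup>2 < t\<^sup>2 * (norm p)\<^sup>2"
    using assms(2) by simp
  moreover have "s * (y \<bullet> p) \<le> t * (y \<bullet> p)"
    using assms by (simp add: mult_right_mono)
  ultimately have "(norm (y + s *\<^sub>R p))\<^sup>2 < (norm (y + t *\<^sub>R p))\<^sup>2"
    unfolding norm_ray_power2 by linarith
  then show ?thesis
    by (simp add: power_less_imp_less_base)
qed

lemma to_bnd_on_ray:
  fixes y p :: "real^'n"
  assumes "norm y < d" and "p \<noteq> 0"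
  shows "\<exists>t\<ge>0. to_bnd y p d = y + t *\<^sub>R p \<and> norm (to_bnd y p d) = d"
proof -
  define t1 where "t1 = (d + norm y) / norm p"
  have "0 \<le> d + norm y"
    using assms(1) norm_ge_zero[of y] by linarith
  then have "0 \<le> t1"
    unfolding t1_def by simp
  have "d \<le> norm (t1 *\<^sub>R p) - norm y"
    unfolding t1_def using assms \<open>0 \<le> d + norm y\<close> by simp
  also have "\<dots> \<le> norm (y + t1 *\<^sub>R p)"
    by (metis add.commute norm_diff_ineq diff_minus_eq_add norm_minus_cancel)
  finally have "\<exists>t. 0 \<le> t \<and> t \<le> t1 \<and> norm (y + t *\<^sub>R p) = d"
    using assms(1) \<open>0 \<le> t1\<close> by (intro IVT') (auto intro!: continuous_intros)
  then have "\<exists>t\<ge>0. norm (y + t *\<^sub>R p) = d"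
    by blast
  from someI_ex[OF this] show ?thesis
    unfolding to_bnd_def by blast
qed

locale cg_sequence =
  fixes g :: "real^'n" and H :: "real^'n^'n" and e :: real
  assumes symmetric: "\<And>u v. u \<bullet> (H *v v) = v \<bullet> (H *v u)"
begin

definition Hshift :: "real^'n \<Rightarrow> real^'n" where
  "Hshift v = H *v v + (2 * e) *\<^sub>R v"

definition cg_y :: "nat \<Rightarrow> real^'n" where "cg_y j = fst (cg_seq g H e j)"
definition cg_r :: "nat \<Rightarrow> real^'n" where "cg_r j = fst (snd (cg_seq g H e j))"
definition cg_p :: "nat \<Rightarrow> real^'n" where "cg_p j = snd (snd (cg_seq g H e j))"

definition cg_alpha :: "nat \<Rightarrow> real" where
  "cg_alpha j = (norm (cg_r j))\<^sup>2 / (cg_p j \<bullet> Hshift (cg_p j))"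

definition cg_beta :: "nat \<Rightarrow> real" where
  "cg_beta j = (norm (cg_r (Suc j)))\<^sup>2 / (norm (cg_r j))\<^sup>2"

definition cg_quad :: "real^'n \<Rightarrow> real" where
  "cg_quad y = g \<bullet> y + 1/2 * (y \<bullet> Hshift y)"

definition cg_regular :: "nat \<Rightarrow> bool" where
  "cg_regular J \<longleftrightarrow> (\<forall>i<J. cg_p i \<bullet> Hshift (cg_p i) > 0) \<and> (\<forall>i\<le>J. cg_r i \<noteq> 0)"

definition cg_orthogonal :: "nat \<Rightarrow> bool" where
  "cg_orthogonal J \<longleftrightarrow>
     (\<forall>i\<le>J. \<forall>k\<le>J. i \<noteq> k \<longrightarrow> cg_r i \<bullet> cg_r k = 0 \<and> cg_p i \<bullet> Hshift (cg_p k) = 0)"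

lemma cg_seq_eq: "cg_seq g H e j = (cg_y j, cg_r j, cg_p j)"
  by (simp add: cg_y_def cg_r_def cg_p_def)

lemma cg_0: "cg_y 0 = 0" "cg_r 0 = g" "cg_p 0 = - g"
  by (simp_all add: cg_y_def cg_r_def cg_p_def)

lemma cg_Suc:
  "cg_y (Suc j) = cg_y j + cg_alpha j *\<^sub>R cg_p j"
  "cg_r (Suc j) = cg_r j + cg_alpha j *\<^sub>R Hshift (cg_p j)"
  "cg_p (Suc j) = - cg_r (Suc j) + cg_beta j *\<^sub>R cg_p j"
  by (simp_all add: cg_y_def cg_r_def cg_p_def cg_alpha_def cg_beta_def Hshift_def Let_def
      split: prod.splits)

lemma Hshift_symmetric: "u \<bullet> Hshift v = v \<bullet> Hshift u"
  unfolding Hshift_def by (simp add: inner_add_right symmetric inner_commute)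

lemma Hshift_inner_left: "Hshift u \<bullet> v = u \<bullet> Hshift v"
  by (metis Hshift_symmetric inner_commute)

lemma Hshift_linear:
  "Hshift (u + v) = Hshift u + Hshift v" "Hshift (c *\<^sub>R u) = c *\<^sub>R Hshift u"
  "Hshift (- u) = - Hshift u" "Hshift 0 = 0"
  unfolding Hshift_def by (simp_all add: algebra_simps matrix_vector_mult_scaleR)
    (metis matrix_vector_mult_scaleR scaleR_minus1_left)

lemma cg_residual_eq: "cg_r j = g + Hshift (cg_y j)"
  by (induction j) (simp_all add: cg_0 cg_Suc Hshift_linear)

lemma cg_regular_Suc: "cg_regular (Suc J) \<Longrightarrow> cg_regular J"
  unfolding cg_regular_def by auto

lemma cg_alpha_pos: "cg_regular J \<Longrightarrow> j < J \<Longrightarrow> cg_alpha j > 0"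
  unfolding cg_regular_def cg_alpha_def by auto

lemma cg_alpha_mult:
  "cg_p j \<bullet> Hshift (cg_p j) \<noteq> 0 \<Longrightarrow> cg_alpha j * (cg_p j \<bullet> Hshift (cg_p j)) = (norm (cg_r j))\<^sup>2"
  unfolding cg_alpha_def by simp

lemma cg_residual_inner_direction:
  "(\<forall>i<j. cg_p i \<bullet> Hshift (cg_p i) \<noteq> 0) \<Longrightarrow> cg_r j \<bullet> cg_p j = - (norm (cg_r j))\<^sup>2"
proof (induction j)
  case 0
  then show ?case by (simp add: cg_0 power2_norm_eq_inner)
next
  case (Suc j)
  have "cg_r (Suc j) \<bullet> cg_p j = cg_r j \<bullet> cg_p j + cg_alpha j * (cg_p j \<bullet> Hshift (cg_p j))"
    by (simp add: cg_Suc inner_add_left Hshift_inner_left)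
  then have "cg_r (Suc j) \<bullet> cg_p j = 0"
    using Suc cg_alpha_mult by simp
  then show ?case
    by (simp add: cg_Suc(3)[of j] inner_add_right inner_diff_right power2_norm_eq_inner)
qed

lemma cg_regular_residual_inner_direction:
  "cg_regular j \<Longrightarrow> cg_r j \<bullet> cg_p j = - (norm (cg_r j))\<^sup>2"
  by (rule cg_residual_inner_direction) (auto simp: cg_regular_def)

lemma cg_orthogonal_Suc_residual:
  assumes reg: "cg_regular (Suc J)" and orth: "cg_orthogonal J" and "i \<le> J"
  shows "cg_r (Suc J) \<bullet> cg_r i = 0"
proof -
  have pAp: "cg_p J \<bullet> Hshift (cg_p J) > 0"
    using reg unfolding cg_regular_def by auto
  have conj: "cg_p J \<bullet> Hshift (cg_p i') = 0" if "i' < J" for i'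
    using orth that unfolding cg_orthogonal_def by auto
  have "cg_r (Suc J) \<bullet> cg_r i = cg_r J \<bullet> cg_r i + cg_alpha J * (Hshift (cg_p J) \<bullet> cg_r i)"
    by (simp add: cg_Suc inner_add_left)
  \<comment> \<open>r_i = \<beta>_(i-1) p_(i-1) - p_i, and p_J is conjugate to p_(i-1)\<close>
  moreover have "Hshift (cg_p J) \<bullet> cg_r i = - (cg_p J \<bullet> Hshift (cg_p i))"
  proof (cases i)
    case 0
    then show ?thesis by (simp add: cg_0 Hshift_inner_left Hshift_linear)
  next
    case (Suc i')
    then have "cg_r i = cg_beta i' *\<^sub>R cg_p i' - cg_p i" by (simp add: cg_Suc(3))
    then show ?thesis
      using conj[of i'] \<open>i \<le> J\<close> Suc by (simp add: inner_diff_right Hshift_inner_left)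
  qed
  ultimately show ?thesis
  proof (cases "i = J")
    case True
    with \<open>Hshift (cg_p J) \<bullet> cg_r i = _\<close> show ?thesis
      using \<open>cg_r (Suc J) \<bullet> cg_r i = _\<close> cg_alpha_mult[of J] pAp
      by (simp add: power2_norm_eq_inner)
  next
    case False
    then have "cg_r J \<bullet> cg_r i = 0" "cg_p J \<bullet> Hshift (cg_p i) = 0"
      using orth \<open>i \<le> J\<close> unfolding cg_orthogonal_def by auto
    with \<open>Hshift (cg_p J) \<bullet> cg_r i = _\<close> \<open>cg_r (Suc J) \<bullet> cg_r i = _\<close> show ?thesis by simp
  qed
qed

lemma cg_orthogonal_Suc_direction:
  assumes reg: "cg_regular (Suc J)" and orth: "cg_orthogonal J" and "i \<le> J"
  shows "cg_p (Suc J) \<bullet> Hshift (cg_p i) = 0"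
proof -
  have res: "cg_r (Suc J) \<bullet> cg_r i' = 0" if "i' \<le> J" for i'
    using cg_orthogonal_Suc_residual[OF reg orth that] .
  have "cg_alpha i \<noteq> 0"
    using cg_alpha_pos[OF reg, of i] \<open>i \<le> J\<close> by simp
  then have "Hshift (cg_p i) = (1 / cg_alpha i) *\<^sub>R (cg_r (Suc i) - cg_r i)"
    by (simp add: cg_Suc)
  then have rAp: "cg_r (Suc J) \<bullet> Hshift (cg_p i)
      = (1 / cg_alpha i) * (cg_r (Suc J) \<bullet> cg_r (Suc i) - cg_r (Suc J) \<bullet> cg_r i)"
    by (simp add: inner_diff_right)
  have "cg_p (Suc J) \<bullet> Hshift (cg_p i)
      = - (cg_r (Suc J) \<bullet> Hshift (cg_p i)) + cg_beta J * (cg_p J \<bullet> Hshift (cg_p i))"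
    by (simp add: cg_Suc(3)[of J] inner_add_left inner_diff_left)
  also have "\<dots> = 0"
  proof (cases "i = J")
    case True
    have pAp: "cg_p J \<bullet> Hshift (cg_p J) > 0"
      using reg unfolding cg_regular_def by auto
    have "cg_r (Suc J) \<bullet> Hshift (cg_p J) = (1 / cg_alpha J) * (norm (cg_r (Suc J)))\<^sup>2"
      using rAp True res[of J] by (simp add: power2_norm_eq_inner)
    moreover have "cg_beta J * (cg_p J \<bullet> Hshift (cg_p J)) = (1 / cg_alpha J) * (norm (cg_r (Suc J)))\<^sup>2"
      using pAp by (simp add: cg_beta_def cg_alpha_def)
    ultimately show ?thesis using True by simp
  next
    case False
    then have "cg_r (Suc J) \<bullet> Hshift (cg_p i) = 0"
      using rAp res[of "Suc i"] res[of i] \<open>i \<le> J\<close> by simp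
    moreover have "cg_p J \<bullet> Hshift (cg_p i) = 0"
      using orth False \<open>i \<le> J\<close> unfolding cg_orthogonal_def by auto
    ultimately show ?thesis by simp
  qed
  finally show ?thesis .
qed

lemma cg_regular_orthogonal: "cg_regular J \<Longrightarrow> cg_orthogonal J"
proof (induction J)
  case 0
  then show ?case by (simp add: cg_orthogonal_def)
next
  case (Suc J)
  then have orth: "cg_orthogonal J"
    using cg_regular_Suc by blast
  note res = cg_orthogonal_Suc_residual[OF Suc.prems orth]
    and dir = cg_orthogonal_Suc_direction[OF Suc.prems orth]
  show ?case
    unfolding cg_orthogonal_def
  proof (intro allI impI)
    fix i k assume "i \<le> Suc J" "k \<le> Suc J" "i \<noteq> k"
    then consider "i = Suc J" "k \<le> J" | "k = Suc J" "i \<le> J" | "i \<le> J" "k \<le> J"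
      by linarith
    then show "cg_r i \<bullet> cg_r k = 0 \<and> cg_p i \<bullet> Hshift (cg_p k) = 0"
    proof cases
      case 1
      then show ?thesis using res dir by simp
    next
      case 2
      then show ?thesis
        using res[of i] dir[of i] by (simp add: inner_commute Hshift_symmetric[of "cg_p i"])
    next
      case 3
      then show ?thesis using orth \<open>i \<noteq> k\<close> unfolding cg_orthogonal_def by blast
    qed
  qed
qed

lemma cg_residual_orthogonal_directions:
  "cg_regular J \<Longrightarrow> k \<le> J \<Longrightarrow> i < k \<Longrightarrow> cg_r k \<bullet> cg_p i = 0"
proof (induction i)
  case 0
  then have "cg_r k \<bullet> cg_r 0 = 0"
    using cg_regular_orthogonal[OF 0(1)] unfolding cg_orthogonal_def by simp
  then show ?case
    by (simp add: cg_0)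
next
  case (Suc i)
  have "cg_r k \<bullet> cg_p (Suc i) = - (cg_r k \<bullet> cg_r (Suc i)) + cg_beta i * (cg_r k \<bullet> cg_p i)"
    by (simp add: cg_Suc(3)[of i] inner_add_right inner_diff_right)
  then show ?case
    using Suc cg_regular_orthogonal[OF Suc(2)] by (simp add: cg_orthogonal_def)
qed

lemma cg_iterate_orthogonal_residual:
  "cg_regular J \<Longrightarrow> k \<le> J \<Longrightarrow> i \<le> k \<Longrightarrow> cg_y i \<bullet> cg_r k = 0"
proof (induction i)
  case 0
  then show ?case by (simp add: cg_0)
next
  case (Suc i)
  have "cg_y (Suc i) \<bullet> cg_r k = cg_y i \<bullet> cg_r k + cg_alpha i * (cg_r k \<bullet> cg_p i)"
    by (simp add: cg_Suc(1)[of i] inner_add_right inner_commute[of _ "cg_r k"])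
  then show ?case
    using Suc cg_residual_orthogonal_directions[OF Suc(2,3), of i] by simp
qed

lemma cg_iterate_inner_direction_nonneg:
  "cg_regular J \<Longrightarrow> j \<le> J \<Longrightarrow> cg_y j \<bullet> cg_p j \<ge> 0"
proof (induction j)
  case 0
  then show ?case by (simp add: cg_0)
next
  case (Suc j)
  have "cg_y (Suc j) \<bullet> cg_p (Suc j)
      = - (cg_y (Suc j) \<bullet> cg_r (Suc j)) + cg_beta j * (cg_y j \<bullet> cg_p j + cg_alpha j * (cg_p j \<bullet> cg_p j))"
    by (simp add: cg_Suc(3)[of j] cg_Suc(1)[of j] inner_add_left inner_add_right inner_diff_right
        algebra_simps)
  moreover have "cg_y (Suc j) \<bullet> cg_r (Suc j) = 0"
    using cg_iterate_orthogonal_residual Suc.prems by simp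
  moreover have "cg_beta j \<ge> 0" "cg_alpha j \<ge> 0"
    using cg_alpha_pos[OF Suc(2), of j] Suc(3) by (simp_all add: cg_beta_def)
  ultimately show ?case
    using Suc by simp
qed

lemma cg_quad_ray:
  assumes "cg_regular j"
  shows "cg_quad (cg_y j + t *\<^sub>R cg_p j)
    = cg_quad (cg_y j) - t * (norm (cg_r j))\<^sup>2 + 1/2 * t\<^sup>2 * (cg_p j \<bullet> Hshift (cg_p j))"
proof -
  have "g \<bullet> cg_p j + cg_y j \<bullet> Hshift (cg_p j) = cg_r j \<bullet> cg_p j"
    by (simp add: cg_residual_eq inner_add_left Hshift_inner_left)
  also have "\<dots> = - (norm (cg_r j))\<^sup>2"
    using cg_regular_residual_inner_direction[OF assms] .
  finally have slope: "g \<bullet> cg_p j + cg_y j \<bullet> Hshift (cg_p j) = - (norm (cg_r j))\<^sup>2" .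
  have "cg_quad (cg_y j + t *\<^sub>R cg_p j)
      = cg_quad (cg_y j) + t * (g \<bullet> cg_p j + cg_y j \<bullet> Hshift (cg_p j))
        + 1/2 * t\<^sup>2 * (cg_p j \<bullet> Hshift (cg_p j))"
    unfolding cg_quad_def using Hshift_symmetric[of "cg_p j" "cg_y j"]
    by (simp add: Hshift_linear inner_add_left inner_add_right algebra_simps power2_eq_square)
  then show ?thesis
    using slope by simp
qed

lemma cg_quad_Suc:
  assumes "cg_regular j" and "cg_p j \<bullet> Hshift (cg_p j) > 0"
  shows "cg_quad (cg_y (Suc j)) = cg_quad (cg_y j) - 1/2 * cg_alpha j * (norm (cg_r j))\<^sup>2"
  using cg_quad_ray[OF assms(1), of "cg_alpha j"] cg_alpha_mult[of j] assms(2)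
  by (simp add: cg_Suc(1) power2_eq_square algebra_simps)

lemma cg_quad_nonpos: "cg_regular J \<Longrightarrow> j \<le> J \<Longrightarrow> cg_quad (cg_y j) \<le> 0"
proof (induction j)
  case 0
  then show ?case by (simp add: cg_0 cg_quad_def Hshift_linear)
next
  case (Suc j)
  then have "cg_regular j" "cg_p j \<bullet> Hshift (cg_p j) > 0" "cg_alpha j > 0"
    using cg_regular_def cg_alpha_pos[of J j] by auto
  then have "cg_quad (cg_y (Suc j)) \<le> cg_quad (cg_y j)"
    by (simp add: cg_quad_Suc)
  then show ?case
    using Suc by simp
qed

lemma cg_quad_Suc_neg:
  assumes "cg_regular j" and "cg_p j \<bullet> Hshift (cg_p j) > 0"
  shows "cg_quad (cg_y (Suc j)) < 0"
proof -
  have "cg_alpha j > 0" "cg_r j \<noteq> 0"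
    using assms by (auto simp: cg_alpha_def cg_regular_def)
  then have "cg_alpha j * (norm (cg_r j))\<^sup>2 > 0"
    by simp
  then show ?thesis
    using cg_quad_Suc[OF assms] cg_quad_nonpos[OF assms(1) order_refl] by simp
qed

lemma cg_negative_curvature_exit:
  assumes reg: "cg_regular j" and inside: "norm (cg_y j) < d" and "0 \<le> e"
    and curv: "cg_p j \<bullet> Hshift (cg_p j) \<le> e * (norm (cg_p j))\<^sup>2"
  defines "s \<equiv> to_bnd (cg_y j) (cg_p j) d"
  shows "norm s = d \<and> cg_quad s \<le> e/2 * (norm s)\<^sup>2"
proof -
  have "cg_p j \<noteq> 0"
    using reg cg_regular_residual_inner_direction[OF reg] by (auto simp: cg_regular_def)
  then obtain t where t: "t \<ge> 0" "s = cg_y j + t *\<^sub>R cg_p j" "norm s = d"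
    using to_bnd_on_ray[OF inside] unfolding s_def by blast
  have "t * (norm (cg_r j))\<^sup>2 \<ge> 0"
    using t by simp
  moreover have "cg_quad s = cg_quad (cg_y j) - t * (norm (cg_r j))\<^sup>2
      + 1/2 * t\<^sup>2 * (cg_p j \<bullet> Hshift (cg_p j))"
    using cg_quad_ray[OF reg] t by simp
  ultimately have "cg_quad s \<le> 1/2 * t\<^sup>2 * (cg_p j \<bullet> Hshift (cg_p j))"
    using cg_quad_nonpos[OF reg order_refl] by linarith
  also have "\<dots> \<le> e/2 * (t\<^sup>2 * (norm (cg_p j))\<^sup>2)"
    using mult_left_mono[OF curv, of "t\<^sup>2 / 2"] by (simp add: algebra_simps)
  also have "\<dots> \<le> e/2 * (norm s)\<^sup>2"
  proof -
    have "(norm s)\<^sup>2 = (norm (cg_y j))\<^sup>2 + 2 * t * (cg_y j \<bullet> cg_p j) + t\<^sup>2 * (norm (cg_p j))\<^sup>2"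
      unfolding t(2) by (rule norm_ray_power2)
    moreover have "0 \<le> t * (cg_y j \<bullet> cg_p j)"
      using t cg_iterate_inner_direction_nonneg[OF reg order_refl] by simp
    ultimately show ?thesis
      using \<open>0 \<le> e\<close> by (intro mult_left_mono) simp_all
  qed
  finally show ?thesis
    using t by simp
qed

lemma cg_boundary_exit:
  assumes reg: "cg_regular j" and inside: "norm (cg_y j) < d"
    and curv: "cg_p j \<bullet> Hshift (cg_p j) > 0" and outside: "d \<le> norm (cg_y (Suc j))"
  defines "s \<equiv> to_bnd (cg_y j) (cg_p j) d"
  shows "norm s = d \<and> cg_quad s \<le> 0"
proof -
  have "cg_p j \<noteq> 0"
    using curv by auto
  have alpha: "cg_alpha j > 0"
    using curv reg by (simp add: cg_alpha_def cg_regular_def)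
  obtain t where t: "t \<ge> 0" "s = cg_y j + t *\<^sub>R cg_p j" "norm s = d"
    using to_bnd_on_ray[OF inside \<open>cg_p j \<noteq> 0\<close>] unfolding s_def by blast
  \<comment> \<open>the norm grows along the ray, so the boundary is reached before the CG step length\<close>
  have "t \<le> cg_alpha j"
  proof (rule ccontr)
    assume "\<not> t \<le> cg_alpha j"
    then have "norm (cg_y (Suc j)) < norm s"
      using t alpha \<open>cg_p j \<noteq> 0\<close> cg_iterate_inner_direction_nonneg[OF reg order_refl]
      by (auto simp: cg_Suc(1) intro!: norm_ray_strict_mono)
    then show False
      using outside t by simp
  qed
  then have "t * (cg_p j \<bullet> Hshift (cg_p j)) \<le> cg_alpha j * (cg_p j \<bullet> Hshift (cg_p j))"
    using curv by (simp add: mult_right_mono)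
  then have "t\<^sup>2 * (cg_p j \<bullet> Hshift (cg_p j)) \<le> t * (cg_alpha j * (cg_p j \<bullet> Hshift (cg_p j)))"
    using t mult_left_mono by (fastforce simp: power2_eq_square mult.assoc)
  moreover have "0 \<le> t * (norm (cg_r j))\<^sup>2"
    using t by simp
  ultimately have "1/2 * t\<^sup>2 * (cg_p j \<bullet> Hshift (cg_p j)) \<le> t * (norm (cg_r j))\<^sup>2"
    using cg_alpha_mult[of j] curv by simp
  then show ?thesis
    using cg_quad_ray[OF reg, of t] cg_quad_nonpos[OF reg order_refl] t by simp
qed

lemma cg_loop_Suc:
  "cg_loop g H e d zeta kmax j (Suc fuel) =
    (if \<not> real j < kmax then (cg_y j, INT_MAX)
     else if cg_p j \<bullet> Hshift (cg_p j) \<le> e * (norm (cg_p j))\<^sup>2 then (to_bnd (cg_y j) (cg_p j) d, BND_NEG)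
     else if norm (cg_y (Suc j)) \<ge> d then (to_bnd (cg_y j) (cg_p j) d, BND_NORM)
     else if norm (cg_r (Suc j)) \<le> zeta / 2 * min (norm g) (e * norm (cg_y (Suc j)))
       then (cg_y (Suc j), INT_RES)
     else cg_loop g H e d zeta kmax (Suc j) fuel)"
  by (simp only: cg_loop.simps cg_seq_eq Let_def Hshift_def prod.case)

lemma cg_loop_exit:
  assumes "0 \<le> e" and "0 \<le> zeta"
  shows "cg_regular j \<Longrightarrow> norm (cg_y j) < d \<Longrightarrow> cg_loop g H e d zeta kmax j fuel = (s, fl)
    \<Longrightarrow> fl \<noteq> INT_MAX \<Longrightarrow> 0 < norm s \<and> norm s \<le> d \<and> cg_quad s \<le> e/2 * (norm s)\<^sup>2"
proof (induction fuel arbitrary: j)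
  case 0
  then show ?case by simp
next
  case (Suc fuel)
  have "0 < d"
    using Suc.prems(2) norm_ge_zero le_less_trans by blast
  have "0 \<le> e/2 * (norm s)\<^sup>2"
    using assms(1) by simp
  note exit = Suc.prems(3)[unfolded cg_loop_Suc]
  show ?case
  proof (cases "cg_p j \<bullet> Hshift (cg_p j) \<le> e * (norm (cg_p j))\<^sup>2")
    case True
    then show ?thesis
      using exit Suc.prems(4) cg_negative_curvature_exit[OF Suc.prems(1,2) assms(1) True] \<open>0 < d\<close>
      by (auto split: if_splits)
  next
    case False
    moreover have "0 \<le> e * (norm (cg_p j))\<^sup>2"
      using assms(1) by simp
    ultimately have curv: "cg_p j \<bullet> Hshift (cg_p j) > 0"
      by linarith
    show ?thesis
    proof (cases "d \<le> norm (cg_y (Suc j))")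
      case True
      then show ?thesis
        using exit Suc.prems(4) False cg_boundary_exit[OF Suc.prems(1,2) curv True]
          \<open>0 \<le> e/2 * (norm s)\<^sup>2\<close> \<open>0 < d\<close>
        by (auto split: if_splits)
    next
      case inside: False
      have "s \<noteq> 0" if "s = cg_y (Suc j)"
        using cg_quad_Suc_neg[OF Suc.prems(1) curv] that by (auto simp: cg_quad_def Hshift_linear)
      moreover have "cg_regular (Suc j)"
        if "\<not> norm (cg_r (Suc j)) \<le> zeta / 2 * min (norm g) (e * norm (cg_y (Suc j)))"
        using that Suc.prems(1) curv assms
        by (auto simp: cg_regular_def less_Suc_eq le_Suc_eq)
      ultimately show ?thesis
        using exit Suc.prems(2,4) False inside Suc.IH cg_quad_Suc_neg[OF Suc.prems(1) curv]
          \<open>0 \<le> e/2 * (norm s)\<^sup>2\<close>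
        by (auto split: if_splits)
    qed
  qed
qed

lemma model_red_eq: "model_red g H s = e * (norm s)\<^sup>2 - cg_quad s"
  unfolding model_red_def cg_quad_def Hshift_def
  by (simp add: inner_add_right power2_norm_eq_inner algebra_simps)

end

lemma truncated_cg_model_decrease:
  fixes g :: "real^'n" and H :: "real^'n^'n"
  assumes "\<And>u v. u \<bullet> (H *v v) = v \<bullet> (H *v u)" and "0 \<le> e" and "0 \<le> zeta" and "0 < d"
    and "g \<noteq> 0" and "truncated_cg g H e d zeta capCG M = (s, fl)" and "fl \<noteq> INT_MAX"
  shows "0 < norm s \<and> norm s \<le> d \<and> e/2 * (norm s)\<^sup>2 \<le> model_red g H s"
proof -
  interpret cg_sequence g H e
    using assms(1) by unfold_locales
  have "0 < norm s \<and> norm s \<le> d \<and> cg_quad s \<le> e/2 * (norm s)\<^sup>2"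
    using assms unfolding truncated_cg_def
    by (intro cg_loop_exit) (simp_all add: cg_regular_def cg_0)
  then show ?thesis
    by (simp add: model_red_eq)
qed

lemma has_real_derivative_along_line:
  fixes F :: "'a::real_normed_vector \<Rightarrow> real"
  assumes "(F has_derivative F') (at (a + t *\<^sub>R b))"
  shows "((\<lambda>t. F (a + t *\<^sub>R b)) has_real_derivative F' b) (at t)"
proof -
  interpret F': bounded_linear F'
    using assms by (rule has_derivative_bounded_linear)
  have "((\<lambda>t. a + t *\<^sub>R b) has_derivative (\<lambda>h. h *\<^sub>R b)) (at t)"
    by (auto intro!: derivative_eq_intros)
  moreover have "(\<lambda>h. F' (h *\<^sub>R b)) = (*) (F' b)"
    by (simp add: F'.scaleR fun_eq_iff)
  ultimately show ?thesis
    using has_derivative_compose[of _ _ t UNIV F F'] assms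
    by (fastforce simp: has_field_derivative_def)
qed

lemma gradient_difference_estimate:
  fixes g :: "'a::real_inner \<Rightarrow> 'a"
  assumes "bounded_linear D"
    and "norm (g (x + h1) - g x - D h1) \<le> e * norm h1"
    and "norm (g (x + h2) - g x - D h2) \<le> e * norm h2"
  shows "\<bar>(g (x + h1) - g (x + h2)) \<bullet> u - D (h1 - h2) \<bullet> u\<bar> \<le> e * (norm h1 + norm h2) * norm u"
proof -
  interpret D: bounded_linear D
    by fact
  have "\<bar>(g (x + h1) - g (x + h2)) \<bullet> u - D (h1 - h2) \<bullet> u\<bar>
      = \<bar>((g (x + h1) - g x - D h1) - (g (x + h2) - g x - D h2)) \<bullet> u\<bar>"
    by (simp add: D.diff inner_diff_left)
  also have "\<dots> \<le> norm ((g (x + h1) - g x - D h1) - (g (x + h2) - g x - D h2)) * norm u"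
    by (rule Cauchy_Schwarz_ineq2)
  also have "\<dots> \<le> (e * norm h1 + e * norm h2) * norm u"
    using assms(2,3) by (intro mult_right_mono order_trans[OF norm_triangle_ineq4]) auto
  finally show ?thesis
    by (simp add: algebra_simps)
qed

definition second_difference :: "('a::real_vector \<Rightarrow> real) \<Rightarrow> 'a \<Rightarrow> 'a \<Rightarrow> 'a \<Rightarrow> real \<Rightarrow> real"
  where "second_difference f x u v t =
    f (x + t *\<^sub>R u + t *\<^sub>R v) - f (x + t *\<^sub>R u) - f (x + t *\<^sub>R v) + f x"

lemma second_difference_commute: "second_difference f x u v t = second_difference f x v u t"
  unfolding second_difference_def by (simp add: ac_simps diff_diff_eq)

lemma second_difference_mean_value:
  fixes f :: "'a::real_inner \<Rightarrow> real"
  assumes f': "\<forall>y\<in>Om. (f has_derivative (\<lambda>h. g y \<bullet> h)) (at y)" and "0 < t"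
    and inside: "\<And>a. 0 \<le> a \<Longrightarrow> a \<le> t \<Longrightarrow> x + a *\<^sub>R u \<in> Om \<and> x + t *\<^sub>R v + a *\<^sub>R u \<in> Om"
  obtains z where "0 < z" and "z < t" and "second_difference f x u v t
    = t * ((g (x + t *\<^sub>R v + z *\<^sub>R u) - g (x + z *\<^sub>R u)) \<bullet> u)"
proof -
  define \<psi> where "\<psi> a = f (x + t *\<^sub>R v + a *\<^sub>R u) - f (x + a *\<^sub>R u)" for a
  define \<psi>' where "\<psi>' a = (g (x + t *\<^sub>R v + a *\<^sub>R u) - g (x + a *\<^sub>R u)) \<bullet> u" for a
  have "(\<psi> has_real_derivative \<psi>' a) (at a)" if "0 \<le> a" "a \<le> t" for a
    unfolding \<psi>_def \<psi>'_def inner_diff_left using inside[OF that] f'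
    by (intro DERIV_diff has_real_derivative_along_line) auto
  then obtain z where "0 < z" "z < t" "\<psi> t - \<psi> 0 = (t - 0) * \<psi>' z"
    using MVT2[OF \<open>0 < t\<close>, of \<psi> \<psi>'] by blast
  moreover have "\<psi> t - \<psi> 0 = second_difference f x u v t"
    unfolding \<psi>_def second_difference_def by (simp add: ac_simps)
  ultimately show ?thesis
    using that unfolding \<psi>'_def by simp
qed

lemma second_difference_approx:
  fixes f :: "'a::real_inner \<Rightarrow> real" and g :: "'a \<Rightarrow> 'a"
  assumes "open Om" and "x \<in> Om" and f': "\<forall>y\<in>Om. (f has_derivative (\<lambda>h. g y \<bullet> h)) (at y)"
    and g': "(g has_derivative D) (at x)" and "e > 0"
  shows "\<exists>d>0. \<forall>t. 0 < t \<and> t < d \<longrightarrow>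
    \<bar>second_difference f x u v t - t\<^sup>2 * (u \<bullet> D v)\<bar> \<le> e * t\<^sup>2 * (2 * (norm u + norm v) * norm u)"
proof -
  have D: "bounded_linear D"
    using g' by (rule has_derivative_bounded_linear)
  interpret D: bounded_linear D
    by (rule D)
  obtain d0 where "d0 > 0"
    and d0: "\<And>y. norm (y - x) < d0 \<Longrightarrow> norm (g y - g x - D (y - x)) \<le> e * norm (y - x)"
    using g' \<open>e > 0\<close> unfolding has_derivative_at_alt by blast
  obtain r where "r > 0" and "ball x r \<subseteq> Om"
    using assms(1,2) open_contains_ball by blast
  define d where "d = min d0 r / (norm u + norm v + 1)"
  have "\<bar>second_difference f x u v t - t\<^sup>2 * (u \<bullet> D v)\<bar>
      \<le> e * t\<^sup>2 * (2 * (norm u + norm v) * norm u)" if "0 < t" "t < d" for t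
  proof -
    have "t * (norm u + norm v) < t * (norm u + norm v + 1)"
      using \<open>0 < t\<close> by simp
    also have "\<dots> < min d0 r"
      using that unfolding d_def by (simp add: pos_less_divide_eq add_nonneg_pos)
    finally have small: "norm h < d0" "x + h \<in> Om" if "norm h \<le> t * (norm u + norm v)" for h
      using that \<open>ball x r \<subseteq> Om\<close> by (auto simp: dist_norm)
    have short: "norm (t *\<^sub>R v + a *\<^sub>R u) \<le> t * (norm u + norm v)"
      "norm (a *\<^sub>R u) \<le> t * (norm u + norm v)" if "0 \<le> a" "a \<le> t" for a
    proof -
      have "a * norm u \<le> t * norm u" "0 \<le> t * norm v"
        using that \<open>0 < t\<close> by (simp_all add: mult_right_mono)
      then show "norm (t *\<^sub>R v + a *\<^sub>R u) \<le> t * (norm u + norm v)"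
        "norm (a *\<^sub>R u) \<le> t * (norm u + norm v)"
        using that \<open>0 < t\<close> norm_triangle_ineq[of "t *\<^sub>R v" "a *\<^sub>R u"]
        by (simp_all only: norm_scaleR abs_of_nonneg distrib_left)
    qed
    have inside: "x + a *\<^sub>R u \<in> Om \<and> x + t *\<^sub>R v + a *\<^sub>R u \<in> Om" if "0 \<le> a" "a \<le> t" for a
      using small(2)[OF short(1)[OF that]] small(2)[OF short(2)[OF that]] by (simp add: add.assoc)
    obtain z where "0 < z" "z < t" and mvt: "second_difference f x u v t
        = t * ((g (x + t *\<^sub>R v + z *\<^sub>R u) - g (x + z *\<^sub>R u)) \<bullet> u)"
      using second_difference_mean_value[OF f' \<open>0 < t\<close> inside] by blast
    define h1 where "h1 = t *\<^sub>R v + z *\<^sub>R u"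
    define h2 where "h2 = z *\<^sub>R u"
    have h: "norm h1 \<le> t * (norm u + norm v)" "norm h2 \<le> t * (norm u + norm v)"
      unfolding h1_def h2_def using short \<open>0 < z\<close> \<open>z < t\<close> by auto
    have "\<bar>(g (x + h1) - g (x + h2)) \<bullet> u - D (h1 - h2) \<bullet> u\<bar> \<le> e * (norm h1 + norm h2) * norm u"
      using gradient_difference_estimate[OF D] d0[of "x + h1"] d0[of "x + h2"] small(1)[OF h(1)]
        small(1)[OF h(2)] by simp
    also have "\<dots> \<le> e * (2 * t * (norm u + norm v)) * norm u"
      using h \<open>e > 0\<close> by (intro mult_right_mono mult_left_mono) auto
    finally have "\<bar>(g (x + t *\<^sub>R v + z *\<^sub>R u) - g (x + z *\<^sub>R u)) \<bullet> u - t * (u \<bullet> D v)\<bar>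
        \<le> e * (2 * t * (norm u + norm v)) * norm u"
      unfolding h1_def h2_def by (simp add: D.scaleR add.assoc inner_commute)
    then have "t * \<bar>(g (x + t *\<^sub>R v + z *\<^sub>R u) - g (x + z *\<^sub>R u)) \<bullet> u - t * (u \<bullet> D v)\<bar>
        \<le> t * (e * (2 * t * (norm u + norm v)) * norm u)"
      using \<open>0 < t\<close> by (simp add: mult_left_mono)
    moreover have "second_difference f x u v t - t\<^sup>2 * (u \<bullet> D v)
        = t * ((g (x + t *\<^sub>R v + z *\<^sub>R u) - g (x + z *\<^sub>R u)) \<bullet> u - t * (u \<bullet> D v))"
      unfolding mvt by (simp add: power2_eq_square algebra_simps)
    ultimately have "\<bar>second_difference f x u v t - t\<^sup>2 * (u \<bullet> D v)\<bar>
        \<le> t * (e * (2 * t * (norm u + norm v)) * norm u)"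
      by (simp only: abs_mult abs_of_pos[OF \<open>0 < t\<close>])
    then show ?thesis
      by (simp add: power2_eq_square algebra_simps)
  qed
  moreover have "d > 0"
    unfolding d_def using \<open>d0 > 0\<close> \<open>r > 0\<close> by (simp add: add_nonneg_pos)
  ultimately show ?thesis
    by blast
qed

lemma second_difference_tendsto:
  fixes f :: "'a::real_inner \<Rightarrow> real" and g :: "'a \<Rightarrow> 'a"
  assumes "open Om" and "x \<in> Om" and "\<forall>y\<in>Om. (f has_derivative (\<lambda>h. g y \<bullet> h)) (at y)"
    and "(g has_derivative D) (at x)"
  shows "((\<lambda>t. second_difference f x u v t / t\<^sup>2) \<longlongrightarrow> u \<bullet> D v) (at_right 0)"
  unfolding tendsto_iff eventually_at_right_field
proof (intro allI impI)
  fix e :: real assume "e > 0"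
  define K where "K = 2 * (norm u + norm v) * norm u + 1"
  have "K > 0"
    unfolding K_def by (simp add: add_nonneg_pos)
  then obtain d where "d > 0" and d: "\<forall>t. 0 < t \<and> t < d \<longrightarrow>
      \<bar>second_difference f x u v t - t\<^sup>2 * (u \<bullet> D v)\<bar> \<le> e / K * t\<^sup>2 * (K - 1)"
    using second_difference_approx[OF assms, of "e / K" u v] \<open>e > 0\<close> unfolding K_def by auto
  have "dist (second_difference f x u v t / t\<^sup>2) (u \<bullet> D v) < e" if "0 < t" "t < d" for t
  proof -
    have "e / K * t\<^sup>2 * (K - 1) < e * t\<^sup>2"
      using \<open>e > 0\<close> \<open>K > 0\<close> \<open>0 < t\<close> by (simp add: field_simps)
    with d that have "\<bar>second_difference f x u v t - t\<^sup>2 * (u \<bullet> D v)\<bar> < e * t\<^sup>2"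
      by fastforce
    moreover have "second_difference f x u v t / t\<^sup>2 - u \<bullet> D v
        = (second_difference f x u v t - t\<^sup>2 * (u \<bullet> D v)) / t\<^sup>2"
      using \<open>0 < t\<close> by (simp add: field_simps)
    ultimately show ?thesis
      using \<open>0 < t\<close> by (simp add: dist_real_def abs_divide divide_less_eq)
  qed
  then show "\<exists>b>0. \<forall>t>0. t < b \<longrightarrow>
    dist (second_difference f x u v t / t\<^sup>2) (u \<bullet> D v) < e"
    using \<open>d > 0\<close> by blast
qed

lemma hessian_symmetric:
  fixes f :: "'a::real_inner \<Rightarrow> real" and g :: "'a \<Rightarrow> 'a"
  assumes "open Om" and "x \<in> Om" and "\<forall>y\<in>Om. (f has_derivative (\<lambda>h. g y \<bullet> h)) (at y)"
    and "(g has_derivative D) (at x)"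
  shows "u \<bullet> D v = v \<bullet> D u"
proof (rule tendsto_unique[OF trivial_limit_at_right_real])
  show "((\<lambda>t. second_difference f x u v t / t\<^sup>2) \<longlongrightarrow> u \<bullet> D v) (at_right 0)"
    by (rule second_difference_tendsto[OF assms])
  show "((\<lambda>t. second_difference f x u v t / t\<^sup>2) \<longlongrightarrow> v \<bullet> D u) (at_right 0)"
    using second_difference_tendsto[OF assms, of v u] by (simp only: second_difference_commute)
qed

lemma cubic_upper_bound:
  fixes \<phi> \<phi>' \<phi>'' :: "real \<Rightarrow> real"
  assumes "\<And>t. 0 \<le> t \<Longrightarrow> t \<le> 1 \<Longrightarrow> (\<phi> has_real_derivative \<phi>' t) (at t)"
    and "\<And>t. 0 \<le> t \<Longrightarrow> t \<le> 1 \<Longrightarrow> (\<phi>' has_real_derivative \<phi>'' t) (at t)"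
    and "\<And>t. 0 \<le> t \<Longrightarrow> t \<le> 1 \<Longrightarrow> \<phi>'' t \<le> \<phi>'' 0 + K * t"
  shows "\<phi> 1 \<le> \<phi> 0 + \<phi>' 0 + \<phi>'' 0 / 2 + K / 6"
proof -
  define \<psi>' where "\<psi>' t = \<phi>' t - \<phi>' 0 - t * \<phi>'' 0 - K / 2 * t\<^sup>2" for t
  define \<psi> where "\<psi> t = \<phi> t - \<phi> 0 - t * \<phi>' 0 - \<phi>'' 0 / 2 * t\<^sup>2 - K / 6 * t ^ 3" for t
  have D\<psi>': "(\<psi>' has_real_derivative \<phi>'' t - \<phi>'' 0 - K * t) (at t)" if "0 \<le> t" "t \<le> 1" for t
    unfolding \<psi>'_def by (auto intro!: derivative_eq_intros assms(2)[OF that])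
  have \<psi>'_nonpos: "\<psi>' t \<le> 0" if "0 \<le> t" "t \<le> 1" for t
  proof -
    have "\<psi>' t \<le> \<psi>' 0"
    proof (rule DERIV_nonpos_imp_nonincreasing[OF \<open>0 \<le> t\<close>])
      fix s assume "0 \<le> s" "s \<le> t"
      then show "\<exists>y. (\<psi>' has_real_derivative y) (at s) \<and> y \<le> 0"
        using D\<psi>'[of s] assms(3)[of s] that by (intro exI conjI) auto
    qed
    then show ?thesis
      by (simp add: \<psi>'_def)
  qed
  have D\<psi>: "(\<psi> has_real_derivative \<psi>' t) (at t)" if "0 \<le> t" "t \<le> 1" for t
    unfolding \<psi>_def \<psi>'_def
    by (auto intro!: derivative_eq_intros assms(1)[OF that] simp: power2_eq_square power3_eq_cube)
  have "\<psi> 1 \<le> \<psi> 0"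
  proof (rule DERIV_nonpos_imp_nonincreasing[OF zero_le_one])
    fix s :: real assume "0 \<le> s" "s \<le> 1"
    then show "\<exists>y. (\<psi> has_real_derivative y) (at s) \<and> y \<le> 0"
      using D\<psi> \<psi>'_nonpos by blast
  qed
  then show ?thesis
    unfolding \<psi>_def by simp
qed

lemma taylor_cubic_upper_bound:
  fixes f :: "real^'n \<Rightarrow> real" and g :: "real^'n \<Rightarrow> real^'n" and H :: "real^'n \<Rightarrow> real^'n^'n"
  assumes seg: "closed_segment x (x + s) \<subseteq> Om"
    and f': "\<forall>y\<in>Om. (f has_derivative (\<lambda>h. g y \<bullet> h)) (at y)"
    and g': "\<forall>y\<in>Om. (g has_derivative (\<lambda>h. H y *v h)) (at y)"
    and lip: "\<forall>y\<in>Om. \<forall>z\<in>Om. onorm (\<lambda>v. (H y - H z) *v v) \<le> LH * norm (y - z)"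
  shows "f (x + s) \<le> f x + g x \<bullet> s + 1/2 * (s \<bullet> (H x *v s)) + LH / 6 * norm s ^ 3"
proof -
  have in_Om: "x + t *\<^sub>R s \<in> Om" if "0 \<le> t" "t \<le> 1" for t
  proof -
    have "x + t *\<^sub>R s \<in> closed_segment x (x + s)"
      unfolding in_segment using that by (intro exI[of _ t]) (simp add: algebra_simps)
    then show ?thesis
      using seg by blast
  qed
  have "(H (x + t *\<^sub>R s) *v s) \<bullet> s \<le> (H x *v s) \<bullet> s + LH * norm s ^ 3 * t"
    if "0 \<le> t" "t \<le> 1" for t
  proof -
    have "((H (x + t *\<^sub>R s) - H x) *v s) \<bullet> s \<le> norm ((H (x + t *\<^sub>R s) - H x) *v s) * norm s"
      by (rule norm_cauchy_schwarz)
    also have "\<dots> \<le> onorm (\<lambda>v. (H (x + t *\<^sub>R s) - H x) *v v) * norm s * norm s"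
      by (intro mult_right_mono onorm) simp_all
    also have "\<dots> \<le> LH * norm (t *\<^sub>R s) * norm s * norm s"
      using bspec[OF bspec[OF lip in_Om[OF that]] in_Om[of 0]] by (intro mult_right_mono) auto
    also have "\<dots> = LH * norm s ^ 3 * t"
      using that by (simp add: power3_eq_cube)
    finally show ?thesis
      by (simp add: matrix_vector_mult_diff_rdistrib inner_diff_left)
  qed
  then have "f (x + 1 *\<^sub>R s) \<le> f (x + 0 *\<^sub>R s) + g (x + 0 *\<^sub>R s) \<bullet> s
      + (H (x + 0 *\<^sub>R s) *v s) \<bullet> s / 2 + LH * norm s ^ 3 / 6"
    using f' g' in_Om
    by (intro cubic_upper_bound has_real_derivative_along_line)
      (auto intro: has_derivative_inner_left)
  then show ?thesis
    by (simp add: inner_commute)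
qed

lemma run_start_exists:
  fixes U S :: "nat set"
  assumes prefix: "\<And>k i. k \<in> U \<Longrightarrow> i \<le> k \<Longrightarrow> i \<in> U \<union> S" and "k \<in> U"
  obtains a where "a \<le> k" and "{a..k} \<subseteq> U" and "a = 0 \<or> (\<exists>j\<in>S. a = Suc j)"
proof -
  define a where "a = (LEAST a. {a..k} \<subseteq> U)"
  have "{k..k} \<subseteq> U"
    using \<open>k \<in> U\<close> by simp
  then have "{a..k} \<subseteq> U" and "a \<le> k"
    unfolding a_def by (rule LeastI, rule Least_le)
  moreover have "j \<in> S" if "a = Suc j" for j
  proof -
    have "\<not> {j..k} \<subseteq> U"
      using not_less_Least[of j "\<lambda>a. {a..k} \<subseteq> U"] that unfolding a_def by simp
    moreover have "{j..k} = insert j {a..k}"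
      using that \<open>a \<le> k\<close> by auto
    ultimately have "j \<notin> U"
      using \<open>{a..k} \<subseteq> U\<close> by auto
    then show ?thesis
      using prefix[OF \<open>k \<in> U\<close>, of j] that \<open>a \<le> k\<close> by simp
  qed
  ultimately show ?thesis
    using that by (cases a) auto
qed

lemma card_le_by_bounded_runs:
  fixes U S :: "nat set"
  assumes "finite S" and prefix: "\<And>k i. k \<in> U \<Longrightarrow> i \<le> k \<Longrightarrow> i \<in> U \<union> S"
    and runs: "\<And>a b. a \<le> b \<Longrightarrow> {a..b} \<subseteq> U \<Longrightarrow> Suc b - a \<le> n"
  shows "finite U \<and> card U \<le> n * (card S + 1)"
proof -
  have cover: "U \<subseteq> {..<n} \<union> (\<Union>j\<in>S. {Suc j..j + n})"
  proof
    fix k assume "k \<in> U"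
    then obtain a where "a \<le> k" "{a..k} \<subseteq> U" "a = 0 \<or> (\<exists>j\<in>S. a = Suc j)"
      using run_start_exists prefix by metis
    moreover have "Suc k - a \<le> n"
      using runs \<open>a \<le> k\<close> \<open>{a..k} \<subseteq> U\<close> by blast
    ultimately show "k \<in> {..<n} \<union> (\<Union>j\<in>S. {Suc j..j + n})"
      by auto
  qed
  have "finite U"
    using \<open>finite S\<close> by (intro finite_subset[OF cover]) auto
  have "card U \<le> card ({..<n} \<union> (\<Union>j\<in>S. {Suc j..j + n}))"
    using cover \<open>finite S\<close> by (intro card_mono) auto
  also have "\<dots> \<le> card {..<n} + card (\<Union>j\<in>S. {Suc j..j + n})"
    by (rule card_Un_le)
  also have "\<dots> \<le> n + (\<Sum>j\<in>S. card {Suc j..j + n})"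
    using card_UN_le[OF \<open>finite S\<close>, of "\<lambda>j. {Suc j..j + n}"] by simp
  also have "\<dots> = n * (card S + 1)"
    by simp
  finally show ?thesis
    using \<open>finite U\<close> by simp
qed

lemma geometric_decay_steps_bound:
  fixes d :: "nat \<Rightarrow> real"
  assumes "0 < \<gamma>" and "\<gamma> < 1" and "0 < r"
    and decay: "\<And>i. a \<le> i \<Longrightarrow> i < b \<Longrightarrow> d (Suc i) \<le> \<gamma> * d i"
    and "d a \<le> D" and "r < d b" and "a \<le> b"
  shows "real (b - a) < log \<gamma> (r / D)"
proof -
  have "d (a + i) \<le> \<gamma> ^ i * D" if "a + i \<le> b" for i
    using that
  proof (induction i)
    case 0
    then show ?case using \<open>d a \<le> D\<close> by simp
  next
    case (Suc i)
    then have "d (a + Suc i) \<le> \<gamma> * d (a + i)"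
      using decay[of "a + i"] by simp
    also have "\<dots> \<le> \<gamma> * (\<gamma> ^ i * D)"
      using Suc \<open>0 < \<gamma>\<close> by simp
    finally show ?case
      by simp
  qed
  from this[of "b - a"] have "r < \<gamma> ^ (b - a) * D"
    using \<open>r < d b\<close> \<open>a \<le> b\<close> by simp
  then have "0 < \<gamma> ^ (b - a) * D"
    using \<open>0 < r\<close> by linarith
  moreover have "0 < \<gamma> ^ (b - a)"
    using \<open>0 < \<gamma>\<close> by simp
  ultimately have "0 < D"
    by (rule zero_less_mult_pos)
  with \<open>r < \<gamma> ^ (b - a) * D\<close> have "r / D < \<gamma> ^ (b - a)"
    by (simp add: divide_less_eq)
  then have "ln (r / D) < real (b - a) * ln \<gamma>"
    using \<open>0 < r\<close> \<open>0 < D\<close> \<open>0 < \<gamma>\<close> by (simp add: ln_realpow[symmetric])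
  then show ?thesis
    using \<open>0 < \<gamma>\<close> \<open>\<gamma> < 1\<close> by (simp add: log_def neg_less_divide_eq)
qed

locale tr_newton_cg_run =
  fixes f :: "real^'n \<Rightarrow> real" and g :: "real^'n \<Rightarrow> real^'n" and H :: "real^'n \<Rightarrow> real^'n^'n"
    and epsg epsH gamma1 gamma2 psi :: real and x0 :: "real^'n"
    and delta0 deltamax eta zeta :: real and capCG :: bool and M :: real
    and x :: "nat \<Rightarrow> real^'n" and delta :: "nat \<Rightarrow> real" and s :: "nat \<Rightarrow> real^'n" and T :: enat
    and Omega :: "(real^'n) set" and LH :: real
  assumes run: "alg4_run f g H epsg epsH gamma1 gamma2 psi x0 delta0 deltamax eta zeta capCG M x delta s T"
    and epsg_pos: "0 < epsg" and epsH_pos: "0 < epsH"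
    and gamma1: "0 < gamma1" "gamma1 < 1" and gamma2_pos: "0 < gamma2"
    and delta0: "0 < delta0" "delta0 \<le> deltamax"
    and eta: "0 < eta" "eta < 1" and zeta_nonneg: "0 \<le> zeta"
    and open_Omega: "open Omega"
    and segments: "\<forall>k. enat k < T \<longrightarrow> closed_segment (x k) (x k + s k) \<subseteq> Omega"
    and gradient: "\<forall>y\<in>Omega. (f has_derivative (\<lambda>h. g y \<bullet> h)) (at y)"
    and hessian: "\<forall>y\<in>Omega. (g has_derivative (\<lambda>h. H y *v h)) (at y)"
    and LH_pos: "0 < LH"
    and hessian_lipschitz: "\<forall>y\<in>Omega. \<forall>z\<in>Omega. onorm (\<lambda>v. (H y - H z) *v v) \<le> LH * norm (y - z)"
begin

abbreviation rho :: "nat \<Rightarrow> real" where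
  "rho k \<equiv> tr_rho f g H x s k"

definition successful :: "nat set" where
  "successful = {k. enat k < T \<and> eta \<le> rho k}"

definition unsuccessful :: "nat set" where
  "unsuccessful = {k. enat k < T \<and> rho k < eta}"

definition step_threshold :: real where
  "step_threshold = 3 * (1 - eta) * epsH / (2 * LH)"

lemma iteration:
  assumes "enat k < T"
  shows "(let (sCG, out) = cg_call g H epsH zeta capCG M (x k) (delta k)
          in (if cg_accepted epsg (g (x k)) out then s k = sCG
              else meo_direction (g (x k)) (H (x k)) epsH (delta k) (s k)))
    \<and> (if eta \<le> rho k
       then x (Suc k) = x k + s k \<and>
            delta (Suc k) = (if norm (s k) \<ge> psi * delta k then min (gamma2 * delta k) deltamax
                             else delta k)
       else x (Suc k) = x k \<and> delta (Suc k) = gamma1 * norm (s k))"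
  using run assms unfolding alg4_run_def by blast

lemma step_choice:
  assumes "enat k < T" and "cg_call g H epsH zeta capCG M (x k) (delta k) = (sCG, out)"
  shows "if cg_accepted epsg (g (x k)) out then s k = sCG
    else meo_direction (g (x k)) (H (x k)) epsH (delta k) (s k)"
  using iteration[OF assms(1)] assms(2) by simp

lemma radius_update:
  assumes "enat k < T"
  shows "eta \<le> rho k \<Longrightarrow> delta (Suc k) =
      (if norm (s k) \<ge> psi * delta k then min (gamma2 * delta k) deltamax else delta k)"
    and "rho k < eta \<Longrightarrow> delta (Suc k) = gamma1 * norm (s k)"
  using iteration[OF assms] by auto

lemma iterate_in_Omega: "enat k < T \<Longrightarrow> x k \<in> Omega"
  using segments by auto

lemma initial_radius: "delta 0 = delta0"
  using run unfolding alg4_run_def by blast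

lemma step_model_decrease:
  assumes "enat k < T" and "0 < delta k"
  shows "0 < norm (s k) \<and> norm (s k) \<le> delta k
    \<and> epsH / 4 * (norm (s k))\<^sup>2 \<le> model_red (g (x k)) (H (x k)) (s k)"
proof -
  obtain sCG out where call: "cg_call g H epsH zeta capCG M (x k) (delta k) = (sCG, out)"
    by fastforce
  show ?thesis
  proof (cases "cg_accepted epsg (g (x k)) out")
    case True
    then have "s k = sCG"
      using step_choice[OF assms(1) call] by simp
    have "g (x k) \<noteq> 0"
      using True call epsg_pos by (auto simp: cg_call_def cg_accepted_def)
    then have cg: "truncated_cg (g (x k)) (H (x k)) epsH (delta k) zeta capCG M = (s k, out)"
      using call \<open>s k = sCG\<close> by (simp add: cg_call_def)
    have "out \<noteq> INT_MAX"
      using True by (auto simp: cg_accepted_def)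
    have "x k \<in> Omega"
      using iterate_in_Omega[OF assms(1)] .
    have symmetric: "u \<bullet> (H (x k) *v v) = v \<bullet> (H (x k) *v u)" for u v
      using hessian_symmetric[OF open_Omega \<open>x k \<in> Omega\<close> gradient
          bspec[OF hessian \<open>x k \<in> Omega\<close>]] .
    have "0 < norm (s k) \<and> norm (s k) \<le> delta k
        \<and> epsH / 2 * (norm (s k))\<^sup>2 \<le> model_red (g (x k)) (H (x k)) (s k)"
      using truncated_cg_model_decrease[OF symmetric _ zeta_nonneg assms(2) \<open>g (x k) \<noteq> 0\<close> cg
          \<open>out \<noteq> INT_MAX\<close>] epsH_pos by simp
    moreover have "epsH / 4 * (norm (s k))\<^sup>2 \<le> epsH / 2 * (norm (s k))\<^sup>2"
      using epsH_pos by simp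
    ultimately show ?thesis
      by linarith
  next
    case False
    then have "meo_direction (g (x k)) (H (x k)) epsH (delta k) (s k)"
      using step_choice[OF assms(1) call] by simp
    then show ?thesis
      using assms(2) epsH_pos unfolding meo_direction_def model_red_def by auto
  qed
qed

lemma small_step_successful:
  assumes "enat k < T" and "0 < delta k" and "norm (s k) \<le> step_threshold"
  shows "eta \<le> rho k"
proof -
  define m where "m = model_red (g (x k)) (H (x k)) (s k)"
  have decrease: "epsH / 4 * (norm (s k))\<^sup>2 \<le> m" and "0 < norm (s k)"
    using step_model_decrease[OF assms(1,2)] unfolding m_def by auto
  moreover have "0 < epsH / 4 * (norm (s k))\<^sup>2"
    using epsH_pos \<open>0 < norm (s k)\<close> by simp
  ultimately have "0 < m"
    by linarith
  have "f (x k + s k) \<le> f (x k) - m + LH / 6 * norm (s k) ^ 3"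
    using taylor_cubic_upper_bound[OF segments[rule_format, OF assms(1)] gradient hessian
        hessian_lipschitz]
    unfolding m_def model_red_def by simp
  moreover have "LH / 6 * norm (s k) ^ 3 \<le> (1 - eta) * m"
  proof -
    have "LH / 6 * norm (s k) ^ 3 = LH / 6 * norm (s k) * (norm (s k))\<^sup>2"
      by (simp add: power2_eq_square power3_eq_cube)
    also have "\<dots> \<le> LH / 6 * step_threshold * (norm (s k))\<^sup>2"
      using assms(3) LH_pos by (intro mult_right_mono) auto
    also have "\<dots> = (1 - eta) * (epsH / 4 * (norm (s k))\<^sup>2)"
      unfolding step_threshold_def using LH_pos by simp
    also have "\<dots> \<le> (1 - eta) * m"
      using decrease eta by (intro mult_left_mono) auto
    finally show ?thesis .
  qed
  ultimately have "eta * m \<le> f (x k) - f (x k + s k)"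
    by (simp add: algebra_simps)
  then show ?thesis
    using \<open>0 < m\<close> unfolding tr_rho_def m_def by (simp add: pos_le_divide_eq)
qed

lemma radius_bounds: "enat k < T \<Longrightarrow> 0 < delta k \<and> delta k \<le> deltamax"
proof (induction k)
  case 0
  then show ?case
    using initial_radius delta0 by simp
next
  case (Suc k)
  have "enat k < T"
    using Suc.prems less_trans[of "enat k" "enat (Suc k)" T] by simp
  with Suc.IH have "0 < delta k" "delta k \<le> deltamax"
    by auto
  show ?case
  proof (cases "eta \<le> rho k")
    case True
    then show ?thesis
      using radius_update(1)[OF \<open>enat k < T\<close>] \<open>0 < delta k\<close> \<open>delta k \<le> deltamax\<close> gamma2_pos
        delta0 by auto
  next
    case False
    then have "delta (Suc k) = gamma1 * norm (s k)"
      using radius_update(2)[OF \<open>enat k < T\<close>] by simp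
    moreover have "0 < norm (s k)" "norm (s k) \<le> delta k"
      using step_model_decrease[OF \<open>enat k < T\<close> \<open>0 < delta k\<close>] by auto
    moreover have "0 < gamma1 * norm (s k)" "gamma1 * norm (s k) \<le> norm (s k)"
      using gamma1 \<open>0 < norm (s k)\<close> by (simp_all add: mult_left_le_one_le)
    ultimately show ?thesis
      using \<open>delta k \<le> deltamax\<close> by linarith
  qed
qed

lemma unsuccessful_step:
  assumes "k \<in> unsuccessful"
  shows "step_threshold < norm (s k) \<and> norm (s k) \<le> delta k \<and> delta (Suc k) = gamma1 * norm (s k)"
proof -
  have "enat k < T" and "rho k < eta"
    using assms unfolding unsuccessful_def by auto
  moreover have "0 < delta k"
    using radius_bounds[OF \<open>enat k < T\<close>] by simp
  moreover have "\<not> norm (s k) \<le> step_threshold"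
  proof
    assume "norm (s k) \<le> step_threshold"
    then have "eta \<le> rho k"
      using small_step_successful \<open>enat k < T\<close> \<open>0 < delta k\<close> by blast
    with \<open>rho k < eta\<close> show False
      by simp
  qed
  ultimately show ?thesis
    using step_model_decrease[of k] radius_update(2)[of k] by simp
qed

lemma unsuccessful_run_length:
  assumes "a \<le> b" and "{a..b} \<subseteq> unsuccessful"
  shows "real (b - a) < log gamma1 (step_threshold / deltamax)"
proof (rule geometric_decay_steps_bound[of gamma1 _ a b delta])
  show "0 < step_threshold"
    unfolding step_threshold_def using eta epsH_pos LH_pos by simp
  show "delta (Suc i) \<le> gamma1 * delta i" if "a \<le> i" "i < b" for i
  proof -
    have "i \<in> unsuccessful"
      using assms(2) that by auto
    then show ?thesis
      using unsuccessful_step[of i] gamma1 by (simp add: mult_left_mono)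
  qed
  show "delta a \<le> deltamax"
    using radius_bounds assms unfolding unsuccessful_def by auto
  show "step_threshold < delta b"
    using unsuccessful_step[of b] assms by auto
qed (use gamma1 assms in auto)

lemma unsuccessful_prefix:
  assumes "k \<in> unsuccessful" and "i \<le> k"
  shows "i \<in> unsuccessful \<union> successful"
proof -
  have "enat i < T"
    using assms le_less_trans[of "enat i" "enat k" T] unfolding unsuccessful_def by simp
  then show ?thesis
    unfolding unsuccessful_def successful_def by auto
qed

lemma unsuccessful_count:
  defines "c \<equiv> \<lfloor>1 + log gamma1 (step_threshold / deltamax)\<rfloor>"
  shows "unsuccessful = {} \<or> (1 \<le> c \<and> (infinite successful \<or> (finite unsuccessful
    \<and> int (card unsuccessful) \<le> c * (int (card successful) + 1))))"
proof -
  have runs: "Suc b - a \<le> nat c" if "a \<le> b" and "{a..b} \<subseteq> unsuccessful" for a b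
    using unsuccessful_run_length[OF that] that unfolding c_def by linarith
  have "1 \<le> c" if "k \<in> unsuccessful" for k
    using runs[of k k] that by simp
  moreover have "finite unsuccessful \<and> int (card unsuccessful) \<le> c * (int (card successful) + 1)"
    if "finite successful" and "1 \<le> c"
  proof -
    have "finite unsuccessful \<and> card unsuccessful \<le> nat c * (card successful + 1)"
      using card_le_by_bounded_runs[OF that(1) unsuccessful_prefix runs] .
    moreover have "int (nat c * (card successful + 1)) = c * (int (card successful) + 1)"
      using \<open>1 \<le> c\<close> by (simp add: algebra_simps)
    ultimately show ?thesis
      by (metis of_nat_le_iff)
  qed
  ultimately show ?thesis
    by blast
qed

end

theorem lemma4p5:
  fixes f :: "real^'n \<Rightarrow> real" and g :: "real^'n \<Rightarrow> real^'n" and H :: "real^'n \<Rightarrow> real^'n^'n"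
    and x :: "nat \<Rightarrow> real^'n" and delta :: "nat \<Rightarrow> real" and s :: "nat \<Rightarrow> real^'n" and T :: enat
    and x0 :: "real^'n" and Omega :: "(real^'n) set"
    and epsg epsH gamma1 gamma2 psi delta0 deltamax eta zeta xi M Lg LH flow :: real
    and capCG :: bool
  assumes "epsg > 0" and "epsH > 0"
    and "0 < gamma1" and "gamma1 < 1" and "gamma2 \<ge> 1"
    and "1 / gamma2 < psi" and "psi \<le> 1"
    and "delta0 > 0" and "deltamax \<ge> delta0"
    and "0 < eta" and "eta < 1" and "0 < zeta" and "zeta < 1" and "0 \<le> xi" and "xi < 1"
    and "M \<ge> Lg"
    and run: "alg4_run f g H epsg epsH gamma1 gamma2 psi x0 delta0 deltamax eta zeta capCG M x delta s T"
    and bdd: "\<forall>k. enat k \<le> T \<longrightarrow> flow \<le> f (x k)"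
    and "open Omega"
    and seg: "\<forall>k. enat k < T \<longrightarrow> closed_segment (x k) (x k + s k) \<subseteq> Omega"
    and "\<forall>y\<in>Omega. (f has_derivative (\<lambda>h. g y \<bullet> h)) (at y)"
    and "\<forall>y\<in>Omega. (g has_derivative (\<lambda>h. H y *v h)) (at y)"
    and "continuous_on Omega H"
    and "Lg > 0" and "\<forall>y\<in>Omega. \<forall>z\<in>Omega. norm (g y - g z) \<le> Lg * norm (y - z)"
    and "LH > 0" and "\<forall>y\<in>Omega. \<forall>z\<in>Omega. onorm (\<lambda>v. (H y - H z) *v v) \<le> LH * norm (y - z)"
  shows "let U = {k. enat k < T \<and> tr_rho f g H x s k < eta};
             S = {k. enat k < T \<and> tr_rho f g H x s k \<ge> eta};
             c = \<lfloor>1 + log gamma1 (3 * (1 - eta) / (2 * LH * deltamax)) + log gamma1 epsH\<rfloor>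
         in U = {} \<or> (c \<ge> 1 \<and> (infinite S \<or> (finite U \<and> int (card U) \<le> c * (int (card S) + 1))))"
proof -
  interpret tr_newton_cg_run f g H epsg epsH gamma1 gamma2 psi x0 delta0 deltamax eta zeta capCG M
    x delta s T Omega LH
    using assms by unfold_locales auto
  have "0 < 3 * (1 - eta) / (2 * LH * deltamax)"
    using assms by simp
  then have "log gamma1 (3 * (1 - eta) / (2 * LH * deltamax)) + log gamma1 epsH
      = log gamma1 (3 * (1 - eta) / (2 * LH * deltamax) * epsH)"
    using \<open>epsH > 0\<close> by (simp only: log_mult_pos)
  also have "3 * (1 - eta) / (2 * LH * deltamax) * epsH = step_threshold / deltamax"
    unfolding step_threshold_def by simp
  finally show ?thesis
    using unsuccessful_count unfolding unsuccessful_def successful_def Let_def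
    by (simp add: add.assoc)
qed

end
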